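(* Let $v_1\ge v_2\ge\cdots\ge v_n>0$, $1\ge q_1\ge\cdots\ge q_n\ge0$, and $a_1,\dots,a_n\ge0$ with $\sum_j a_j>0$. For $\sigma\in S_n$ let $f(\sigma)=\frac{\sum_i v_{\sigma_i}a_iq_i}{\sum_j v_{\sigma_j}a_j}$, and let $\lambda^q=f(\mathrm{id})=\frac{\sum_i v_ia_iq_i}{\sum_j v_ja_j}$ (the quality ranking). Then $$\max_{\sigma\in S_n} f(\sigma)\;\le\;\frac{v_1}{v_n}\,\lambda^q.$$ Moreover the factor $v_1/v_n$ is tight: for every $c\in(0,1)$ and every $\delta>0$ there exist appeals $a_1,a_2,a_3\ge0$ (not all zero) and qualities $1\ge q_1\ge q_2\ge q_3\ge0$ such that, with $n=3$ and visibilities $(v_1,v_2,v_3)=(1,1,c)$, one has $\max_\sigma f(\sigma)\ge(\frac{1}{c}-\delta)\lambda^q$.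
   Context: Static trial-offer market: a ranking $\sigma\in S_n$ places product $i$ in position $\sigma_i$, position $p$ has visibility $v_p$, product $i$ is tried with probability $\frac{v_{\sigma_i}a_i}{\sum_j v_{\sigma_j}a_j}$ and then purchased with probability $q_i$; $f(\sigma)$ is the expected number of purchases in one step. The quality ranking is the identity ranking $\sigma_i=i$. *)

theory Defs
  imports Complex_Main "HOL-Combinatorics.Permutations"
begin

text \<open>Products are indexed 1..n; positions 1..n. A ranking sigma is a permutation of
  {1..n}; product i is placed at position sigma i. v, a, q are visibilities, appeals, qualities.\<close>

definition purch :: "nat \<Rightarrow> (nat \<Rightarrow> real) \<Rightarrow> (nat \<Rightarrow> real) \<Rightarrow> (nat \<Rightarrow> real) \<Rightarrow> (nat \<Rightarrow> nat) \<Rightarrow> real" where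
  "purch n v a q \<sigma> = (\<Sum>i\<in>{1..n}. v (\<sigma> i) * a i * q i) / (\<Sum>j\<in>{1..n}. v (\<sigma> j) * a j)"

definition max_purch :: "nat \<Rightarrow> (nat \<Rightarrow> real) \<Rightarrow> (nat \<Rightarrow> real) \<Rightarrow> (nat \<Rightarrow> real) \<Rightarrow> real" where
  "max_purch n v a q = Max {purch n v a q \<sigma> | \<sigma>. \<sigma> permutes {1..n}}"

end

theory Submission
  imports Defs
begin

text \<open>Whatever the ranking, the numerator of \<open>f(\<sigma>)\<close> is at most \<open>v\<^sub>1 \<Sum> a\<^sub>i q\<^sub>i\<close> and
  the denominator at least \<open>v\<^sub>n \<Sum> a\<^sub>i\<close>, so \<open>f(\<sigma>) \<le> (v\<^sub>1/v\<^sub>n) \<cdot> \<Sum> a\<^sub>i q\<^sub>i / \<Sum> a\<^sub>i\<close>.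
  Under the quality ranking visibility and quality are similarly ordered, so the weighted
  Chebyshev inequality gives \<open>\<lambda>\<^sup>q \<ge> \<Sum> a\<^sub>i q\<^sub>i / \<Sum> a\<^sub>i\<close>. For tightness, take appeals
  \<open>(\<epsilon>, 1, 0)\<close> and qualities \<open>(1, 0, 0)\<close>: moving the worthless second product to the
  low-visibility slot raises \<open>\<epsilon>/(\<epsilon>+1)\<close> to \<open>\<epsilon>/(\<epsilon>+c)\<close>, a ratio tending to \<open>1/c\<close>
  as \<open>\<epsilon> \<rightarrow> 0\<close>.\<close>

lemma weighted_Chebyshev_sum:
  fixes w x y :: "'b \<Rightarrow> 'a::linordered_idom"
  assumes "\<And>i. i \<in> S \<Longrightarrow> w i \<ge> 0"
    and "\<And>i j. i \<in> S \<Longrightarrow> j \<in> S \<Longrightarrow> (x i - x j) * (y i - y j) \<ge> 0"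
  shows "(\<Sum>i\<in>S. w i * x i) * (\<Sum>i\<in>S. w i * y i) \<le> (\<Sum>i\<in>S. w i * x i * y i) * (\<Sum>i\<in>S. w i)"
proof -
  let ?E = "\<Sum>i\<in>S. \<Sum>j\<in>S. w i * w j * (x i * y i - x i * y j)"
  have "0 \<le> (\<Sum>i\<in>S. \<Sum>j\<in>S. w i * w j * ((x i - x j) * (y i - y j)))"
    using assms by (intro sum_nonneg) (simp add: mult_nonneg_nonneg)
  also have "\<dots> = ?E + (\<Sum>i\<in>S. \<Sum>j\<in>S. w i * w j * (x j * y j - x j * y i))"
    by (simp add: sum.distrib[symmetric] algebra_simps)
  also have "(\<Sum>i\<in>S. \<Sum>j\<in>S. w i * w j * (x j * y j - x j * y i)) = ?E"
    by (subst sum.swap) (simp add: mult.commute)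
  also have "?E = (\<Sum>i\<in>S. w i * x i * y i) * (\<Sum>i\<in>S. w i) - (\<Sum>i\<in>S. w i * x i) * (\<Sum>i\<in>S. w i * y i)"
    unfolding sum_product by (simp add: sum_subtractf algebra_simps)
  finally show ?thesis by (simp add: mult.commute)
qed

lemma finite_purch_values: "finite {purch n v a q \<sigma> | \<sigma>. \<sigma> permutes {1..n}}"
proof -
  have "{purch n v a q \<sigma> | \<sigma>. \<sigma> permutes {1..n}} = purch n v a q ` {\<sigma>. \<sigma> permutes {1..n}}"
    by auto
  then show ?thesis using finite_permutations[of "{1..n}"] by simp
qed

lemma purch_le_max_purch: "\<sigma> permutes {1..n} \<Longrightarrow> purch n v a q \<sigma> \<le> max_purch n v a q"
  unfolding max_purch_def by (rule Max_ge[OF finite_purch_values]) blast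

lemma max_purch_le:
  assumes "\<And>\<sigma>. \<sigma> permutes {1..n} \<Longrightarrow> purch n v a q \<sigma> \<le> B"
  shows "max_purch n v a q \<le> B"
  unfolding max_purch_def using assms permutes_id[of "{1..n}"]
  by (subst Max_le_iff[OF finite_purch_values]) blast+

lemma quality_average_le_purch_id:
  assumes similar: "\<And>i j. i \<in> {1..n} \<Longrightarrow> j \<in> {1..n} \<Longrightarrow> (v i - v j) * (q i - q j) \<ge> 0"
    and v_pos: "\<And>i. i \<in> {1..n} \<Longrightarrow> v i > 0"
    and a_nonneg: "\<And>i. i \<in> {1..n} \<Longrightarrow> a i \<ge> 0"
    and a_sum: "(\<Sum>i\<in>{1..n}. a i) > 0"
  shows "(\<Sum>i\<in>{1..n}. a i * q i) / (\<Sum>i\<in>{1..n}. a i) \<le> purch n v a q id"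
proof -
  obtain k where "k \<in> {1..n}" "a k > 0"
    using a_sum sum_nonpos[of "{1..n}" a] by (metis not_le)
  then have "(\<Sum>i\<in>{1..n}. a i * v i) > 0"
    using a_nonneg v_pos by (intro sum_pos2[of _ k]) (auto intro: mult_pos_pos mult_nonneg_nonneg less_imp_le)
  moreover have "(\<Sum>i\<in>{1..n}. a i * v i) * (\<Sum>i\<in>{1..n}. a i * q i)
      \<le> (\<Sum>i\<in>{1..n}. a i * v i * q i) * (\<Sum>i\<in>{1..n}. a i)"
    using a_nonneg similar by (rule weighted_Chebyshev_sum)
  ultimately show ?thesis
    using a_sum unfolding purch_def by (simp add: divide_simps ac_simps)
qed

lemma purch_le_scaled_quality_average:
  assumes "\<sigma> permutes {1..n}"
    and v_bounds: "\<And>i. i \<in> {1..n} \<Longrightarrow> v_min \<le> v i \<and> v i \<le> v_max" and "v_min > 0"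
    and a_nonneg: "\<And>i. i \<in> {1..n} \<Longrightarrow> a i \<ge> 0"
    and q_nonneg: "\<And>i. i \<in> {1..n} \<Longrightarrow> q i \<ge> 0"
    and a_sum: "(\<Sum>i\<in>{1..n}. a i) > 0"
  shows "purch n v a q \<sigma> \<le> v_max / v_min * ((\<Sum>i\<in>{1..n}. a i * q i) / (\<Sum>i\<in>{1..n}. a i))"
proof -
  have \<sigma>_bounds: "v_min \<le> v (\<sigma> i) \<and> v (\<sigma> i) \<le> v_max" if "i \<in> {1..n}" for i
    using v_bounds permutes_in_image[OF assms(1)] that by blast
  have num: "(\<Sum>i\<in>{1..n}. v (\<sigma> i) * a i * q i) \<le> v_max * (\<Sum>i\<in>{1..n}. a i * q i)"
    unfolding sum_distrib_left using \<sigma>_bounds a_nonneg q_nonneg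
    by (intro sum_mono) (simp add: mult.assoc mult_right_mono)
  have den: "v_min * (\<Sum>i\<in>{1..n}. a i) \<le> (\<Sum>i\<in>{1..n}. v (\<sigma> i) * a i)"
    unfolding sum_distrib_left using \<sigma>_bounds a_nonneg
    by (intro sum_mono) (simp add: mult_right_mono)
  have "v_min * (\<Sum>i\<in>{1..n}. a i) > 0" using \<open>v_min > 0\<close> a_sum by simp
  moreover have "1 \<in> {1..n}" using a_sum by (cases n) auto
  then have "v_max > 0" using v_bounds \<open>v_min > 0\<close> by fastforce
  then have "v_max * (\<Sum>i\<in>{1..n}. a i * q i) \<ge> 0"
    using a_nonneg q_nonneg by (auto intro!: mult_nonneg_nonneg sum_nonneg)
  ultimately have "purch n v a q \<sigma> \<le> v_max * (\<Sum>i\<in>{1..n}. a i * q i) / (v_min * (\<Sum>i\<in>{1..n}. a i))"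
    unfolding purch_def using num den by (intro frac_le) auto
  then show ?thesis by simp
qed

lemma scaled_ratio_bound:
  fixes c \<delta> :: real
  assumes "0 < c" "c < 1" "\<delta> > 0"
  defines "e \<equiv> \<delta> * c^2 / (1 - c)"
  shows "(1 / c - \<delta>) * (e / (e + 1)) \<le> e / (e + c)"
proof -
  \<comment> \<open>\<open>e\<close> is chosen so that \<open>e (1/c - 1) = \<delta> c\<close>\<close>
  have "e > 0" "e * (1 - c) = \<delta> * c^2" using assms by (simp_all add: e_def)
  then have "(1 / c - \<delta>) * (e + c) \<le> e + 1"
    using assms by (simp add: field_simps power2_eq_square)
  then have "1 / c - \<delta> \<le> (e + 1) / (e + c)"
    using \<open>e > 0\<close> \<open>c > 0\<close> by (simp add: pos_le_divide_eq)
  then have "(1 / c - \<delta>) * (e / (e + 1)) \<le> (e + 1) / (e + c) * (e / (e + 1))"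
    using \<open>e > 0\<close> by (intro mult_right_mono) auto
  also have "\<dots> = e / (e + c)"
    using \<open>e > 0\<close> by simp
  finally show ?thesis .
qed

lemma max_purch_le_visibility_ratio:
  fixes n :: nat and v a q :: "nat \<Rightarrow> real"
  assumes v_mono: "\<And>i j. 1 \<le> i \<Longrightarrow> i \<le> j \<Longrightarrow> j \<le> n \<Longrightarrow> v j \<le> v i"
    and v_pos: "v n > 0"
    and q_mono: "\<And>i j. 1 \<le> i \<Longrightarrow> i \<le> j \<Longrightarrow> j \<le> n \<Longrightarrow> q j \<le> q i"
    and q_nonneg: "q n \<ge> 0"
    and a_nonneg: "\<And>i. 1 \<le> i \<Longrightarrow> i \<le> n \<Longrightarrow> a i \<ge> 0"
    and a_sum: "(\<Sum>j\<in>{1..n}. a j) > 0"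
  shows "max_purch n v a q \<le> v 1 / v n * purch n v a q id"
proof -
  let ?avg = "(\<Sum>i\<in>{1..n}. a i * q i) / (\<Sum>i\<in>{1..n}. a i)"
  have v_bounds: "v n \<le> v i \<and> v i \<le> v 1" if "i \<in> {1..n}" for i
    using that v_mono[of i n] v_mono[of 1 i] by auto
  have similar: "(v i - v j) * (q i - q j) \<ge> 0" if "i \<in> {1..n}" "j \<in> {1..n}" for i j
    using that v_mono[of i j] q_mono[of i j] v_mono[of j i] q_mono[of j i]
    by (cases "i \<le> j") (auto intro: mult_nonpos_nonpos)
  have "v 1 / v n \<ge> 0"
    using v_bounds[of 1] v_pos a_sum by (cases n) auto
  moreover have "?avg \<le> purch n v a q id"
    using similar v_bounds v_pos a_nonneg a_sum
    by (intro quality_average_le_purch_id) (auto intro: less_le_trans)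
  moreover have "max_purch n v a q \<le> v 1 / v n * ?avg"
    using v_bounds v_pos a_nonneg q_nonneg q_mono a_sum
    by (intro max_purch_le purch_le_scaled_quality_average) (auto intro: order.trans)
  ultimately show ?thesis by (meson mult_left_mono order.trans)
qed

lemma visibility_ratio_tight:
  fixes c \<delta> :: real
  assumes "0 < c" "c < 1" "\<delta> > 0"
  shows "\<exists>a' q' :: nat \<Rightarrow> real.
      (\<forall>i\<in>{1..3}. a' i \<ge> 0) \<and> (\<exists>i\<in>{1..3}. a' i \<noteq> 0) \<and>
      1 \<ge> q' 1 \<and> q' 1 \<ge> q' 2 \<and> q' 2 \<ge> q' 3 \<and> q' 3 \<ge> 0 \<and>
      max_purch 3 (\<lambda>i. if i = 3 then c else 1) a' q'
        \<ge> (1 / c - \<delta>) * purch 3 (\<lambda>i. if i = 3 then c else 1) a' q' id"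
proof -
  define e where "e = \<delta> * c^2 / (1 - c)"
  define a' :: "nat \<Rightarrow> real" where "a' i = (if i = 1 then e else if i = 2 then 1 else 0)" for i
  define q' :: "nat \<Rightarrow> real" where "q' i = (if i = 1 then 1 else 0)" for i
  let ?v = "\<lambda>i::nat. if i = 3 then c else 1"
  have "e > 0" using assms by (simp add: e_def)
  have "{1..3::nat} = {1, 2, 3}" by auto
  then have "purch 3 ?v a' q' id = e / (e + 1)"
    and "purch 3 ?v a' q' (Transposition.transpose 2 3) = e / (e + c)"
    by (simp_all add: purch_def a'_def q'_def transpose_def)
  moreover have "purch 3 ?v a' q' (Transposition.transpose 2 3) \<le> max_purch 3 ?v a' q'"
    by (intro purch_le_max_purch permutes_swap_id) auto
  ultimately have "max_purch 3 ?v a' q' \<ge> (1 / c - \<delta>) * purch 3 ?v a' q' id"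
    using scaled_ratio_bound[OF assms] by (simp add: e_def)
  moreover have "(\<forall>i\<in>{1..3}. a' i \<ge> 0) \<and> a' 2 \<noteq> 0"
    using \<open>e > 0\<close> by (simp add: a'_def)
  ultimately show ?thesis
    by (intro exI[of _ a'] exI[of _ q']) (auto simp: q'_def intro: bexI[of _ 2])
qed

theorem mainTheorem10:
  fixes n :: nat and v a q :: "nat \<Rightarrow> real"
  assumes v_mono: "\<And>i j. 1 \<le> i \<Longrightarrow> i \<le> j \<Longrightarrow> j \<le> n \<Longrightarrow> v j \<le> v i"
    and v_pos: "v n > 0"
    and q_mono: "\<And>i j. 1 \<le> i \<Longrightarrow> i \<le> j \<Longrightarrow> j \<le> n \<Longrightarrow> q j \<le> q i"
    and q_le1: "q 1 \<le> 1" and q_nonneg: "q n \<ge> 0"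
    and a_nonneg: "\<And>i. 1 \<le> i \<Longrightarrow> i \<le> n \<Longrightarrow> a i \<ge> 0"
    and a_sum: "(\<Sum>j\<in>{1..n}. a j) > 0"
  shows "max_purch n v a q \<le> v 1 / v n * purch n v a q id
    \<and> (\<forall>c::real. 0 < c \<and> c < 1 \<longrightarrow> (\<forall>\<delta>::real. \<delta> > 0 \<longrightarrow>
         (\<exists>a' q' :: nat \<Rightarrow> real.
            (\<forall>i\<in>{1..3}. a' i \<ge> 0) \<and> (\<exists>i\<in>{1..3}. a' i \<noteq> 0) \<and>
            1 \<ge> q' 1 \<and> q' 1 \<ge> q' 2 \<and> q' 2 \<ge> q' 3 \<and> q' 3 \<ge> 0 \<and>
            max_purch 3 (\<lambda>i. if i = 3 then c else 1) a' q'
              \<ge> (1 / c - \<delta>) * purch 3 (\<lambda>i. if i = 3 then c else 1) a' q' id)))"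
proof (intro conjI allI impI)
  show "max_purch n v a q \<le> v 1 / v n * purch n v a q id"
    using assms by (intro max_purch_le_visibility_ratio)
qed (use visibility_ratio_tight in blast)

end
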